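(* Let $A$ be a Lagrange tensor along $c$ with base point $t_0$ and fix $v\in E_{t_0}$. (a) The vector field $t\mapsto A_t^{-*}v$ is smooth on the set of regular points. If $t^*$ is a singular point, then $A_t^{-*}v$ has a smooth extension across $t=t^*$ if and only if $v$ is orthogonal to $\ker A_{t^*}$. (b) For $v\neq0$, the function $g_v$ extends continuously to all $t$ (with $g_v(t^* )=0$ at singular points $t^*$ with $v\not\perp\ker A_{t^*}$, where $\|A_t^{-*}v\|\to\infty$), and $g_v(t)>0$ if and only if $v$ is orthogonal to $\ker A_t$.
   Context: Setting: $(M^{n+1},g)$ is a Riemannian manifold and $c:I\to M$ a unit-speed geodesic on an interval $I$. For $t\in I$ let $E_t=\dot c(t)^\perp\subset T_{c(t)}M$ and let $R_t:E_t\to E_t$, $R_t(x)=R(x,\dot c(t))\dot c(t)$. For a vector field $X$ along $c$, $X'$ denotes $\nabla_{\dot c}X$. Fix a base point $t_0\in I$. A Jacobi tensor is a smooth family of linear maps $A_t:E_{t_0}\to E_t$ with $A_t''+R_tA_t=0$. It is a Lagrange tensor if $\ker A_{t_0}\cap\ker A'_{t_0}=0$ and $\langle A_t'v,A_tw\rangle=\langle A_tv,A_t'w\rangle$ for all $t$ and all $v,w\in E_{t_0}$. A point $t$ is regular if $A_t$ is invertible and singular otherwise. $A_t^*:E_t\to E_{t_0}$ is the adjoint of $A_t$ and $A_t^{-*}=(A_t^* )^{-1}$ (at regular $t$). For $0\ne v\in E_{t_0}$, $g_v(t)=\|v\|^2/\|A_t^{-*}v\|$ at regular $t$. *)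

theory Defs
  imports "HOL-Analysis.Analysis"
begin

definition smooth_on :: "real set \<Rightarrow> (real \<Rightarrow> 'a::real_normed_vector) \<Rightarrow> bool" where
  "smooth_on S f \<longleftrightarrow> (\<exists>D :: nat \<Rightarrow> real \<Rightarrow> 'a.
      (\<forall>t\<in>S. D 0 t = f t) \<and>
      (\<forall>k. \<forall>t\<in>S. (D k has_vector_derivative D (Suc k) t) (at t within S)))"

text \<open>Everything is expressed in a parallel orthonormal frame along c,
  identifying E_t with real^'n.  The adjoint becomes the transpose.\<close>
definition inv_adj :: "real^'n^'n \<Rightarrow> real^'n \<Rightarrow> real^'n" where
  "inv_adj M v = matrix_inv (transpose M) *v v"

definition perp_ker :: "real^'n \<Rightarrow> real^'n^'n \<Rightarrow> bool" where
  "perp_ker v M \<longleftrightarrow> (\<forall>x. M *v x = 0 \<longrightarrow> v \<bullet> x = 0)"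

end

theory Submission
  imports Defs
begin

text \<open>The Jacobi equation makes \<open>A\<close> smooth, and a Gronwall estimate for \<open>|A x|\<^sup>2 + |A' x|\<^sup>2\<close>
  propagates the Lagrange condition \<open>ker A t0 \<inter> ker A' t0 = 0\<close> to every \<open>t\<close>.
  Near a point \<open>ts\<close> let \<open>P\<close> be the orthogonal projection onto \<open>ker A ts\<close>. Hadamard's lemma
  gives \<open>A t = B t (1 - P + (t - ts) P)\<close> with \<open>B\<close> smooth, and \<open>B ts = A ts (1 - P) + A' ts P\<close>
  is invertible because the Lagrange symmetry makes the images of the two summands orthogonal.
  Hence \<open>A t\<^sup>-\<^sup>* v = B t\<^sup>-\<^sup>* (v - P v + P v / (t - ts))\<close> near \<open>ts\<close>: if \<open>P v = 0\<close>, i.e.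
  \<open>v \<bottom> ker A ts\<close>, this is the smooth field \<open>B t\<^sup>-\<^sup>* v\<close> and \<open>g\<^sub>v\<close> extends by
  \<open>|v|\<^sup>2 / |B ts\<^sup>-\<^sup>* v| > 0\<close>; otherwise \<open>|A t\<^sup>-\<^sup>* v| \<ge> c / |t - ts|\<close>, so \<open>g\<^sub>v\<close> tends to \<open>0\<close>
  and no continuous extension of \<open>A t\<^sup>-\<^sup>* v\<close> exists, since it would solve \<open>A ts\<^sup>* X = v\<close>.\<close>

text \<open>Derivatives are two-sided (\<open>at t\<close>, not \<open>at t within S\<close>); on open sets, \<open>Ck_on\<close> for all
  \<open>k\<close> is equivalent to \<open>smooth_on\<close>.\<close>
fun Ck_on :: "nat \<Rightarrow> real set \<Rightarrow> (real \<Rightarrow> 'a::real_normed_vector) \<Rightarrow> bool" where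
  "Ck_on 0 S f = True"
| "Ck_on (Suc k) S f = (\<exists>f'. (\<forall>t\<in>S. (f has_vector_derivative f' t) (at t)) \<and> Ck_on k S f')"

lemma Ck_on_SucD: "Ck_on (Suc k) S f \<Longrightarrow> Ck_on k S f"
  by (induction k arbitrary: f) auto

lemma Ck_on_imp_continuous_on: "Ck_on (Suc k) S f \<Longrightarrow> continuous_on S f"
  by (meson Ck_on.simps(2) continuous_at_imp_continuous_on has_vector_derivative_continuous)

lemma Ck_on_cong:
  assumes "open S" "Ck_on k S f" "\<And>t. t \<in> S \<Longrightarrow> f t = g t"
  shows "Ck_on k S g"
proof (cases k)
  case (Suc m)
  then obtain f' where "\<forall>t\<in>S. (f has_vector_derivative f' t) (at t)" "Ck_on m S f'"
    using assms(2) by auto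
  then show ?thesis
    using Suc assms(1,3) has_vector_derivative_transform_within_open by fastforce
qed simp

lemma Ck_on_subset: "T \<subseteq> S \<Longrightarrow> Ck_on k S f \<Longrightarrow> Ck_on k T f"
  by (induction k arbitrary: f) auto

lemma Ck_on_const: "Ck_on k S (\<lambda>t. c)"
proof (induction k arbitrary: c)
  case (Suc k)
  show ?case
    by (simp only: Ck_on.simps, rule exI[of _ "\<lambda>t. 0"]) (simp add: Suc.IH)
qed simp

lemma Ck_on_linear:
  assumes "bounded_linear L"
  shows "Ck_on k S f \<Longrightarrow> Ck_on k S (\<lambda>t. L (f t))"
proof (induction k arbitrary: f)
  case (Suc k)
  then obtain f' where f': "\<forall>t\<in>S. (f has_vector_derivative f' t) (at t)" "Ck_on k S f'"
    by auto
  have "\<forall>t\<in>S. ((\<lambda>t. L (f t)) has_vector_derivative L (f' t)) (at t)"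
    using f'(1) bounded_linear.has_vector_derivative[OF assms] by blast
  then show ?case
    using Suc.IH[OF f'(2)] by auto
qed simp

lemma Ck_on_add: "Ck_on k S f \<Longrightarrow> Ck_on k S g \<Longrightarrow> Ck_on k S (\<lambda>t. f t + g t)"
proof (induction k arbitrary: f g)
  case (Suc k)
  obtain f' where f': "\<forall>t\<in>S. (f has_vector_derivative f' t) (at t)" "Ck_on k S f'"
    using Suc by auto
  obtain g' where g': "\<forall>t\<in>S. (g has_vector_derivative g' t) (at t)" "Ck_on k S g'"
    using Suc by auto
  have "\<forall>t\<in>S. ((\<lambda>t. f t + g t) has_vector_derivative f' t + g' t) (at t)"
    using f'(1) g'(1) has_vector_derivative_add by blast
  then show ?case
    using Suc.IH[OF f'(2) g'(2)] by auto
qed simp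

lemma Ck_on_minus: "Ck_on k S f \<Longrightarrow> Ck_on k S (\<lambda>t. - f t)"
  using Ck_on_linear[OF bounded_linear_minus[OF bounded_linear_ident]] by auto

lemma Ck_on_bilinear:
  assumes h: "bounded_bilinear h"
  shows "Ck_on k S f \<Longrightarrow> Ck_on k S g \<Longrightarrow> Ck_on k S (\<lambda>t. h (f t) (g t))"
proof (induction k arbitrary: f g)
  case (Suc k)
  obtain f' where f': "\<forall>t\<in>S. (f has_vector_derivative f' t) (at t)" "Ck_on k S f'"
    using Suc by auto
  obtain g' where g': "\<forall>t\<in>S. (g has_vector_derivative g' t) (at t)" "Ck_on k S g'"
    using Suc by auto
  have "\<forall>t\<in>S. ((\<lambda>t. h (f t) (g t)) has_vector_derivative h (f t) (g' t) + h (f' t) (g t)) (at t)"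
    using f'(1) g'(1) bounded_bilinear.has_vector_derivative[OF h] by blast
  moreover have "Ck_on k S (\<lambda>t. h (f t) (g' t) + h (f' t) (g t))"
    using Suc.IH[OF Ck_on_SucD[OF Suc.prems(1)] g'(2)] Suc.IH[OF f'(2) Ck_on_SucD[OF Suc.prems(2)]]
    by (rule Ck_on_add)
  ultimately show ?case by auto
qed simp

lemma Ck_on_mult: "Ck_on k S (f :: real \<Rightarrow> real) \<Longrightarrow> Ck_on k S g \<Longrightarrow> Ck_on k S (\<lambda>t. f t * g t)"
  by (rule Ck_on_bilinear[OF bounded_bilinear_mult])

lemma Ck_on_scaleR: "Ck_on k S f \<Longrightarrow> Ck_on k S g \<Longrightarrow> Ck_on k S (\<lambda>t. f t *\<^sub>R g t)"
  by (rule Ck_on_bilinear[OF bounded_bilinear_scaleR])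

lemma Ck_on_sum:
  "finite A \<Longrightarrow> (\<And>i. i \<in> A \<Longrightarrow> Ck_on k S (f i)) \<Longrightarrow> Ck_on k S (\<lambda>t. \<Sum>i\<in>A. f i t)"
  by (induction A rule: finite_induct) (auto intro: Ck_on_add Ck_on_const)

lemma Ck_on_prod:
  "finite A \<Longrightarrow> (\<And>i. i \<in> A \<Longrightarrow> Ck_on k S (f i :: real \<Rightarrow> real)) \<Longrightarrow> Ck_on k S (\<lambda>t. \<Prod>i\<in>A. f i t)"
  by (induction A rule: finite_induct) (auto intro: Ck_on_mult Ck_on_const)

lemma Ck_on_inverse:
  "Ck_on k S (g :: real \<Rightarrow> real) \<Longrightarrow> (\<forall>t\<in>S. g t \<noteq> 0) \<Longrightarrow> Ck_on k S (\<lambda>t. inverse (g t))"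
proof (induction k arbitrary: g)
  case (Suc k)
  obtain g' where g': "\<forall>t\<in>S. (g has_vector_derivative g' t) (at t)" "Ck_on k S g'"
    using Suc by auto
  have "\<forall>t\<in>S. ((\<lambda>t. inverse (g t)) has_vector_derivative - (inverse (g t) * g' t * inverse (g t))) (at t)"
    using g'(1) Suc.prems(2) DERIV_inverse'
    unfolding has_real_derivative_iff_has_vector_derivative[symmetric] by blast
  moreover have "Ck_on k S (\<lambda>t. - (inverse (g t) * g' t * inverse (g t)))"
    using Suc.IH[OF Ck_on_SucD[OF Suc.prems(1)] Suc.prems(2)] g'(2)
    by (intro Ck_on_minus Ck_on_mult)
  ultimately show ?case by auto
qed simp

lemma Ck_on_euclidean:
  fixes f :: "real \<Rightarrow> 'a::euclidean_space"
  assumes "\<And>b. b \<in> Basis \<Longrightarrow> Ck_on k S (\<lambda>t. f t \<bullet> b)"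
  shows "Ck_on k S f"
proof -
  have "Ck_on k S (\<lambda>t. \<Sum>b\<in>Basis. (f t \<bullet> b) *\<^sub>R b)"
    by (intro Ck_on_sum Ck_on_scaleR Ck_on_const assms) auto
  then show ?thesis by (simp add: euclidean_representation)
qed

lemma Ck_on_matrix:
  fixes M :: "real \<Rightarrow> real^'n^'m"
  assumes "\<And>i j. Ck_on k S (\<lambda>t. M t $ i $ j)"
  shows "Ck_on k S M"
  by (rule Ck_on_euclidean) (auto simp: Basis_vec_def inner_axis assms)

lemma Ck_on_matrix_entry: "Ck_on k S M \<Longrightarrow> Ck_on k S (\<lambda>t. M t $ i $ j)"
  by (intro Ck_on_linear[OF bounded_linear_vec_nth])

lemma smooth_on_imp_Ck_on:
  assumes "open S" "smooth_on S f"
  shows "Ck_on k S f"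
proof -
  obtain D where D: "\<forall>t\<in>S. D 0 t = f t"
    "\<forall>k. \<forall>t\<in>S. (D k has_vector_derivative D (Suc k) t) (at t within S)"
    using assms(2) unfolding smooth_on_def by blast
  have "Ck_on k S (D j)" for j
  proof (induction k arbitrary: j)
    case (Suc k)
    have "(D j has_vector_derivative D (Suc j) t) (at t)" if "t \<in> S" for t
      using D(2)[THEN spec, of j, THEN bspec, OF that] at_within_open[OF that assms(1)] by simp
    then show ?case
      unfolding Ck_on.simps by (intro exI[of _ "D (Suc j)"]) (simp add: Suc.IH)
  qed simp
  then show ?thesis using Ck_on_cong[OF assms(1), of k "D 0" f] D(1) by auto
qed

lemma smooth_on_imp_continuous_on: "open S \<Longrightarrow> smooth_on S f \<Longrightarrow> continuous_on S f"
  using Ck_on_imp_continuous_on smooth_on_imp_Ck_on by blast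

lemma Ck_on_imp_smooth_on:
  fixes f :: "real \<Rightarrow> 'a::real_normed_vector"
  assumes "open S" "\<And>k. Ck_on k S f"
  shows "smooth_on S f"
proof -
  define der :: "(real \<Rightarrow> 'a) \<Rightarrow> real \<Rightarrow> 'a" where "der g t = vector_derivative g (at t)" for g t
  have der: "\<forall>t\<in>S. (g has_vector_derivative der g t) (at t)" "Ck_on k S (der g)"
    if g: "Ck_on (Suc k) S g" for g k
  proof -
    obtain g' where g': "\<forall>t\<in>S. (g has_vector_derivative g' t) (at t)" "Ck_on k S g'"
      using g by auto
    then have eq: "g' t = der g t" if "t \<in> S" for t
      unfolding der_def using that by (intro vector_derivative_at[symmetric]) blast
    then show "\<forall>t\<in>S. (g has_vector_derivative der g t) (at t)"
      using g'(1) by simp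
    show "Ck_on k S (der g)"
      by (rule Ck_on_cong[OF assms(1) g'(2) eq])
  qed
  define D where "D j = (der ^^ j) f" for j
  have D_Suc: "D (Suc j) = der (D j)" for j
    by (simp add: D_def)
  have D_Ck: "Ck_on m S (D j)" for j m
  proof (induction j arbitrary: m)
    case (Suc j)
    show ?case unfolding D_Suc by (rule der(2)[OF Suc.IH])
  qed (simp add: D_def assms(2))
  have "(D k has_vector_derivative D (Suc k) t) (at t within S)" if "t \<in> S" for k t
    unfolding D_Suc using der(1)[OF D_Ck] that by (simp add: has_vector_derivative_at_within)
  moreover have "D 0 = f"
    by (simp add: D_def)
  ultimately show ?thesis
    unfolding smooth_on_def by (intro exI[of _ D]) simp
qed

lemma bounded_bilinear_matrix_matrix_mult:
  "bounded_bilinear (\<lambda>(A::real^'n^'m) (B::real^'k^'n). A ** B)"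
  unfolding bilinear_conv_bounded_bilinear[symmetric] bilinear_def linear_iff
  by (simp add: vec_eq_iff matrix_matrix_mult_def sum_distrib_left algebra_simps sum.distrib)

lemma bounded_bilinear_matrix_vector_mult:
  "bounded_bilinear (\<lambda>(A::real^'n^'m) (x::real^'n). A *v x)"
  unfolding bilinear_conv_bounded_bilinear[symmetric] bilinear_def linear_iff
  by (simp add: vec_eq_iff matrix_vector_mult_def sum_distrib_left algebra_simps sum.distrib)

lemma bounded_linear_transpose: "bounded_linear (transpose :: real^'n^'m \<Rightarrow> real^'m^'n)"
  unfolding linear_conv_bounded_linear[symmetric] linear_iff
  by (simp add: vec_eq_iff transpose_def)

lemma norm_matrix_vector_mult_le: "norm ((M::real^'n^'m) *v x) \<le> norm M * norm x"
proof (rule power2_le_imp_le)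
  have "(norm (M *v x))\<^sup>2 = (\<Sum>i\<in>UNIV. (M $ i \<bullet> x)\<^sup>2)"
    unfolding power2_norm_eq_inner inner_vec_def matrix_vector_mul_component by (simp add: power2_eq_square)
  also have "\<dots> \<le> (\<Sum>i\<in>UNIV. (norm (M $ i))\<^sup>2 * (norm x)\<^sup>2)"
  proof (rule sum_mono)
    fix i
    have "\<bar>M $ i \<bullet> x\<bar> \<le> norm (M $ i) * norm x"
      by (rule Cauchy_Schwarz_ineq2)
    then show "(M $ i \<bullet> x)\<^sup>2 \<le> (norm (M $ i))\<^sup>2 * (norm x)\<^sup>2"
      by (metis abs_ge_zero power2_abs power_mono power_mult_distrib)
  qed
  also have "\<dots> = (norm M * norm x)\<^sup>2"
    by (simp add: power_mult_distrib sum_distrib_right norm_vec_def L2_set_def sum_nonneg)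
  finally show "(norm (M *v x))\<^sup>2 \<le> (norm M * norm x)\<^sup>2" .
qed simp

lemma inner_matrix_vector_mult_transpose:
  "((M::real^'n^'m) *v a) \<bullet> b = a \<bullet> (transpose M *v b)"
  using dot_lmul_matrix[of b M a] by (simp add: inner_commute)

lemma matrix_inv_right: "invertible M \<Longrightarrow> M ** matrix_inv M = mat 1"
  unfolding invertible_def matrix_inv_def by (rule someI2_ex) auto

lemma matrix_inv_left: "invertible M \<Longrightarrow> matrix_inv M ** M = mat 1"
  unfolding invertible_def matrix_inv_def by (rule someI2_ex) auto

lemma matrix_inv_solves: "invertible (M::real^'n^'n) \<Longrightarrow> M *v (matrix_inv M *v v) = v"
  by (simp add: matrix_vector_mul_assoc matrix_inv_right)

lemma matrix_inv_unique_solution: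
  "invertible (M::real^'n^'n) \<Longrightarrow> M *v w = v \<Longrightarrow> w = matrix_inv M *v v"
  by (metis matrix_inv_left matrix_vector_mul_assoc matrix_vector_mul_lid)

lemma matrix_inv_entry:
  fixes M :: "real^'n^'n"
  assumes "invertible M"
  shows "matrix_inv M $ i $ j = det (\<chi> a b. if b = i then (if a = j then 1 else 0) else M $ a $ b) / det M"
proof -
  have "det M \<noteq> 0" using assms invertible_det_nz by blast
  moreover have "M *v (matrix_inv M *v axis j 1) = axis j 1"
    using matrix_inv_solves[OF assms] .
  ultimately have "matrix_inv M *v axis j 1
      = (\<chi> k. det (\<chi> a b. if b = k then (axis j 1 :: real^'n) $ a else M $ a $ b) / det M)"
    using cramer by blast
  moreover have "(matrix_inv M *v axis j 1) $ i = matrix_inv M $ i $ j"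
    by (simp add: matrix_vector_mult_def axis_def if_distrib sum.delta cong: if_cong)
  moreover have "(\<chi> a b. if b = i then (axis j 1 :: real^'n) $ a else M $ a $ b)
      = (\<chi> a b. if b = i then (if a = j then 1 else 0) else M $ a $ b)"
    by (simp add: vec_eq_iff axis_def)
  ultimately show ?thesis by simp
qed

lemma invertible_imp_perp_ker: "invertible M \<Longrightarrow> perp_ker v (M::real^'n^'n)"
  unfolding perp_ker_def invertible_left_inverse matrix_left_invertible_ker by auto

lemma Ck_on_matrix_mult:
  "Ck_on k S (A::real \<Rightarrow> real^'n^'m) \<Longrightarrow> Ck_on k S (B::real \<Rightarrow> real^'j^'n) \<Longrightarrow> Ck_on k S (\<lambda>t. A t ** B t)"
  by (rule Ck_on_bilinear[OF bounded_bilinear_matrix_matrix_mult])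

lemma Ck_on_matrix_vector_mult:
  "Ck_on k S (A::real \<Rightarrow> real^'n^'m) \<Longrightarrow> Ck_on k S (x::real \<Rightarrow> real^'n) \<Longrightarrow> Ck_on k S (\<lambda>t. A t *v x t)"
  by (rule Ck_on_bilinear[OF bounded_bilinear_matrix_vector_mult])

lemma Ck_on_transpose: "Ck_on k S (A::real \<Rightarrow> real^'n^'m) \<Longrightarrow> Ck_on k S (\<lambda>t. transpose (A t))"
  by (rule Ck_on_linear[OF bounded_linear_transpose])

lemma Ck_on_det:
  fixes M :: "real \<Rightarrow> real^'n^'n"
  assumes "\<And>i j. Ck_on k S (\<lambda>t. M t $ i $ j)"
  shows "Ck_on k S (\<lambda>t. det (M t))"
  unfolding det_def by (intro Ck_on_sum Ck_on_mult Ck_on_prod Ck_on_const assms) auto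

lemma Ck_on_matrix_inv:
  fixes M :: "real \<Rightarrow> real^'n^'n"
  assumes "open S" "Ck_on k S M" "\<forall>t\<in>S. invertible (M t)"
  shows "Ck_on k S (\<lambda>t. matrix_inv (M t))"
proof (rule Ck_on_matrix)
  fix i j
  have entries: "Ck_on k S (\<lambda>t. (\<chi> a b. if b = i then (if a = j then 1 else 0) else M t $ a $ b) $ a' $ b')"
    for a' b'
    by (cases "b' = i") (simp_all add: Ck_on_const Ck_on_matrix_entry assms(2))
  then have "Ck_on k S (\<lambda>t. det (\<chi> a b. if b = i then (if a = j then 1 else 0) else M t $ a $ b)
      * inverse (det (M t)))"
    using assms(3) invertible_det_nz
    by (intro Ck_on_mult Ck_on_det Ck_on_inverse entries Ck_on_matrix_entry[OF assms(2)]) auto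
  then show "Ck_on k S (\<lambda>t. matrix_inv (M t) $ i $ j)"
    by (rule Ck_on_cong[OF assms(1)]) (use assms(3) in \<open>simp add: matrix_inv_entry divide_inverse\<close>)
qed

lemma Ck_on_inv_adj:
  assumes "open S" "Ck_on k S M" "\<forall>t\<in>S. invertible (M t)"
  shows "Ck_on k S (\<lambda>t. inv_adj (M t) v)"
  unfolding inv_adj_def using assms
  by (intro Ck_on_matrix_vector_mult Ck_on_const Ck_on_matrix_inv Ck_on_transpose)
    (auto intro: transpose_invertible)

lemma inv_adj_solves: "invertible M \<Longrightarrow> transpose M *v inv_adj M v = v"
  unfolding inv_adj_def by (rule matrix_inv_solves[OF transpose_invertible])

lemma inv_adj_unique: "invertible M \<Longrightarrow> transpose M *v w = v \<Longrightarrow> inv_adj M v = w"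
  unfolding inv_adj_def by (rule matrix_inv_unique_solution[OF transpose_invertible, symmetric])

lemma inv_adj_nonzero: "invertible M \<Longrightarrow> v \<noteq> 0 \<Longrightarrow> inv_adj M v \<noteq> 0"
  using inv_adj_solves[of M v] by auto

lemma perp_ker_of_eventually_solves:
  fixes M :: "real \<Rightarrow> real^'n^'n" and X :: "real \<Rightarrow> real^'n"
  assumes M: "isCont M ts" and X: "isCont X ts"
    and solves: "eventually (\<lambda>t. transpose (M t) *v X t = v) (at ts)"
  shows "perp_ker v (M ts)"
proof -
  have "((\<lambda>t. transpose (M t) *v X t) \<longlongrightarrow> transpose (M ts) *v X ts) (at ts)"
    using bounded_bilinear.tendsto[OF bounded_bilinear_matrix_vector_mult
        bounded_linear.tendsto[OF bounded_linear_transpose M[unfolded isCont_def]] X[unfolded isCont_def]] .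
  moreover have "((\<lambda>t. transpose (M t) *v X t) \<longlongrightarrow> v) (at ts)"
    using solves by (rule tendsto_eventually)
  ultimately have "transpose (M ts) *v X ts = v"
    using tendsto_unique[OF at_neq_bot] by blast
  then show ?thesis
    unfolding perp_ker_def using inner_matrix_vector_mult_transpose[of "transpose (M ts)" "X ts"]
    by (auto simp del: transpose_matrix_vector)
qed

lemma vanishes_forward_of_deriv_bound:
  fixes E E' :: "real \<Rightarrow> real"
  assumes "a \<le> b" and E: "\<And>s. s \<in> {a..b} \<Longrightarrow> (E has_real_derivative E' s) (at s)"
    and bound: "\<And>s. s \<in> {a..b} \<Longrightarrow> \<bar>E' s\<bar> \<le> C * E s"
    and nonneg: "\<And>s. s \<in> {a..b} \<Longrightarrow> 0 \<le> E s" and "E a = 0"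
  shows "E b = 0"
proof -
  define g where "g s = - E s * exp (- C * (s - a))" for s
  have "g a \<le> g b"
  proof (rule deriv_nonneg_imp_mono[OF _ _ \<open>a \<le> b\<close>])
    fix s assume s: "s \<in> {a..b}"
    show "(g has_real_derivative (- E' s * exp (- C * (s - a)) + - E s * (exp (- C * (s - a)) * (- C)))) (at s)"
      unfolding g_def using E[OF s] by (auto intro!: derivative_eq_intros)
    have "0 \<le> (C * E s - E' s) * exp (- C * (s - a))"
      using bound[OF s] by (intro mult_nonneg_nonneg) auto
    then show "0 \<le> - E' s * exp (- C * (s - a)) + - E s * (exp (- C * (s - a)) * (- C))"
      by (simp add: algebra_simps)
  qed
  then have "E b * exp (- C * (b - a)) \<le> 0"
    using \<open>E a = 0\<close> by (simp add: g_def)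
  then have "E b \<le> 0"
    by (simp add: mult_le_0_iff)
  then show ?thesis using nonneg[of b] \<open>a \<le> b\<close> by auto
qed

lemma vanishes_backward_of_deriv_bound:
  fixes E E' :: "real \<Rightarrow> real"
  assumes "a \<le> b" and E: "\<And>s. s \<in> {a..b} \<Longrightarrow> (E has_real_derivative E' s) (at s)"
    and bound: "\<And>s. s \<in> {a..b} \<Longrightarrow> \<bar>E' s\<bar> \<le> C * E s"
    and nonneg: "\<And>s. s \<in> {a..b} \<Longrightarrow> 0 \<le> E s" and "E b = 0"
  shows "E a = 0"
proof -
  define g where "g s = E s * exp (C * (s - b))" for s
  have "g a \<le> g b"
  proof (rule deriv_nonneg_imp_mono[OF _ _ \<open>a \<le> b\<close>])
    fix s assume s: "s \<in> {a..b}"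
    show "(g has_real_derivative (E' s * exp (C * (s - b)) + E s * (exp (C * (s - b)) * C))) (at s)"
      unfolding g_def using E[OF s] by (auto intro!: derivative_eq_intros)
    have "0 \<le> (E' s + C * E s) * exp (C * (s - b))"
      using bound[OF s] by (intro mult_nonneg_nonneg) auto
    then show "0 \<le> E' s * exp (C * (s - b)) + E s * (exp (C * (s - b)) * C)"
      by (simp add: algebra_simps)
  qed
  then have "E a \<le> 0"
    using \<open>E b = 0\<close> by (simp add: g_def mult_le_0_iff)
  then show ?thesis using nonneg[of a] \<open>a \<le> b\<close> by auto
qed

lemma vanishes_of_deriv_bound:
  fixes E E' :: "real \<Rightarrow> real"
  assumes E: "\<And>s. s \<in> closed_segment t0 t1 \<Longrightarrow> (E has_real_derivative E' s) (at s)"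
    and bound: "\<And>s. s \<in> closed_segment t0 t1 \<Longrightarrow> \<bar>E' s\<bar> \<le> C * E s"
    and nonneg: "\<And>s. 0 \<le> E s" and "E t1 = 0"
  shows "E t0 = 0"
proof (cases "t0 \<le> t1")
  case True
  then show ?thesis
    using vanishes_backward_of_deriv_bound[of t0 t1 E E' C] assms by (simp add: closed_segment_eq_real_ivl)
next
  case False
  then show ?thesis
    using vanishes_forward_of_deriv_bound[of t1 t0 E E' C] assms by (simp add: closed_segment_eq_real_ivl)
qed

lemma interval_segment_mem:
  assumes "is_interval I" "ts \<in> I" "t \<in> I" "u \<in> {0..1::real}"
  shows "ts + u * (t - ts) \<in> I"
proof -
  have "(1 - u) *\<^sub>R ts + u *\<^sub>R t \<in> I"
    using assms is_interval_convex_1 by (intro convexD) auto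
  then show ?thesis by (simp add: algebra_simps)
qed

lemma hadamard_lemma:
  fixes f :: "real \<Rightarrow> 'a::banach"
  assumes I: "is_interval I" and ts: "ts \<in> I" and t: "t \<in> I"
    and f: "\<And>s. s \<in> I \<Longrightarrow> (f has_vector_derivative f' s) (at s)"
  shows "f t - f ts = (t - ts) *\<^sub>R integral {0..1} (\<lambda>u. f' (ts + u * (t - ts)))"
proof (cases "t = ts")
  case False
  define c where "c = t - ts"
  have c: "c \<noteq> 0" using False by (simp add: c_def)
  have "((\<lambda>u. c *\<^sub>R f' (ts + u * c)) has_integral (f (ts + 1 * c) - f (ts + 0 * c))) {0..1}"
  proof (rule fundamental_theorem_of_calculus)
    fix u :: real assume u: "u \<in> {0..1}"
    have "((\<lambda>u. ts + u * c) has_vector_derivative c) (at u)"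
      unfolding has_real_derivative_iff_has_vector_derivative[symmetric]
      by (auto intro!: derivative_eq_intros)
    from vector_diff_chain_at[OF this f[OF interval_segment_mem[OF I ts t u, folded c_def]]]
    show "((\<lambda>u. f (ts + u * c)) has_vector_derivative c *\<^sub>R f' (ts + u * c)) (at u within {0..1})"
      by (simp add: o_def has_vector_derivative_at_within)
  qed simp
  then have "((\<lambda>u. c *\<^sub>R f' (ts + u * c)) has_integral c *\<^sub>R ((1 / c) *\<^sub>R (f t - f ts))) {0..1}"
    using c by (simp add: c_def)
  then have "((\<lambda>u. f' (ts + u * c)) has_integral (1 / c) *\<^sub>R (f t - f ts)) {0..1}"
    using has_integral_cmul_iff[OF c] by blast
  then show ?thesis
    using c by (simp add: c_def integral_unique)
qed simp

lemma Ck_on_hadamard_quotient: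
  fixes F :: "real \<Rightarrow> 'a::euclidean_space"
  assumes I: "open I" "is_interval I" and ts: "ts \<in> I"
  shows "Ck_on (Suc (Suc k)) I F \<Longrightarrow> Ck_on k I (\<lambda>t. integral {0..1} (\<lambda>u. u ^ j *\<^sub>R F (ts + u * (t - ts))))"
proof (induction k arbitrary: F j)
  case (Suc k)
  obtain F' where F': "\<forall>t\<in>I. (F has_vector_derivative F' t) (at t)" "Ck_on (Suc (Suc k)) I F'"
    using Suc.prems by auto
  have cF: "continuous_on I F" using Ck_on_imp_continuous_on[OF Suc.prems] .
  have cF': "continuous_on I F'" using Ck_on_imp_continuous_on[OF F'(2)] .
  have seg: "ts + u * (x - ts) \<in> I" if "x \<in> I" "u \<in> cbox 0 1" for x u
    using interval_segment_mem[OF I(2) ts that(1)] that(2) by simp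
  have "((\<lambda>t. integral (cbox 0 1) (\<lambda>u. u ^ j *\<^sub>R F (ts + u * (t - ts)))) has_vector_derivative
      integral (cbox 0 1) (\<lambda>u. u ^ Suc j *\<^sub>R F' (ts + u * (t - ts)))) (at t within I)" if t: "t \<in> I" for t
  proof (rule leibniz_rule_vector_derivative[where f = "\<lambda>t u. u ^ j *\<^sub>R F (ts + u * (t - ts))"])
    fix x and u :: real
    assume x: "x \<in> I" and u: "u \<in> cbox 0 1"
    have "((\<lambda>x. ts + u * (x - ts)) has_vector_derivative u) (at x within I)"
      unfolding has_real_derivative_iff_has_vector_derivative[symmetric]
      by (auto intro!: derivative_eq_intros)
    from vector_diff_chain_within[OF this has_vector_derivative_at_within[OF F'(1)[rule_format, OF seg[OF x u]]]]
    have "((\<lambda>x. F (ts + u * (x - ts))) has_vector_derivative u *\<^sub>R F' (ts + u * (x - ts))) (at x within I)"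
      by (simp add: o_def)
    from bounded_linear.has_vector_derivative[OF bounded_linear_scaleR_right this, of "u ^ j"]
    show "((\<lambda>x. u ^ j *\<^sub>R F (ts + u * (x - ts))) has_vector_derivative u ^ Suc j *\<^sub>R F' (ts + u * (x - ts))) (at x within I)"
      by (simp add: mult.commute)
  next
    fix x assume x: "x \<in> I"
    have "continuous_on (cbox 0 1) (\<lambda>u. u ^ j *\<^sub>R F (ts + u * (x - ts)))"
      by (intro continuous_intros continuous_on_compose2[OF cF]) (use seg x in auto)
    then show "(\<lambda>u. u ^ j *\<^sub>R F (ts + u * (x - ts))) integrable_on cbox 0 1"
      by (rule integrable_continuous)
  next
    show "continuous_on (I \<times> cbox 0 1) (\<lambda>(x, u). u ^ Suc j *\<^sub>R F' (ts + u * (x - ts)))"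
      unfolding case_prod_beta
      by (intro continuous_intros continuous_on_compose2[OF cF']) (use seg in auto)
  qed (use t I(2) is_interval_convex_1 in auto)
  then have "\<forall>t\<in>I. ((\<lambda>t. integral {0..1} (\<lambda>u. u ^ j *\<^sub>R F (ts + u * (t - ts)))) has_vector_derivative
      integral {0..1} (\<lambda>u. u ^ Suc j *\<^sub>R F' (ts + u * (t - ts)))) (at t)"
    using at_within_open[OF _ I(1)] by fastforce
  then show ?case
    using Suc.IH[OF F'(2), of "Suc j"] by auto
qed simp

lemmas matrix_mult_diff_left = bounded_bilinear.diff_left[OF bounded_bilinear_matrix_matrix_mult]
lemmas matrix_mult_diff_right = bounded_bilinear.diff_right[OF bounded_bilinear_matrix_matrix_mult]
lemmas matrix_mult_add_left = bounded_bilinear.add_left[OF bounded_bilinear_matrix_matrix_mult]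
lemmas matrix_mult_scaleR_left = bounded_bilinear.scaleR_left[OF bounded_bilinear_matrix_matrix_mult]
lemmas matrix_mult_scaleR_right = bounded_bilinear.scaleR_right[OF bounded_bilinear_matrix_matrix_mult]

definition kernel_projection :: "real^'n^'n \<Rightarrow> real^'n^'n" where
  "kernel_projection M = (SOME P. transpose P = P \<and> P ** P = P
     \<and> (\<forall>x. M *v (P *v x) = 0) \<and> (\<forall>x. M *v x = 0 \<longrightarrow> P *v x = x))"

lemma orthonormal_expansion_eq:
  fixes B :: "'a::euclidean_space set"
  assumes B: "finite B" "pairwise orthogonal B" "\<And>b. b \<in> B \<Longrightarrow> norm b = 1" and y: "y \<in> span B"
  shows "(\<Sum>b\<in>B. (b \<bullet> y) *\<^sub>R b) = y"
proof -
  define d where "d = y - (\<Sum>b\<in>B. (b \<bullet> y) *\<^sub>R b)"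
  have orthonormal: "b \<bullet> b' = (if b = b' then 1 else 0)" if "b \<in> B" "b' \<in> B" for b b'
    using B(2,3) that unfolding pairwise_def orthogonal_def
    by (auto simp: power2_norm_eq_inner[symmetric])
  have "orthogonal d b" if b: "b \<in> B" for b
  proof -
    have "(\<Sum>b'\<in>B. (b' \<bullet> y) *\<^sub>R b') \<bullet> b = (\<Sum>b'\<in>B. if b' = b then b \<bullet> y else 0)"
      unfolding inner_sum_left by (rule sum.cong) (use orthonormal b in auto)
    also have "\<dots> = b \<bullet> y"
      using B(1) b by simp
    finally show ?thesis
      unfolding orthogonal_def d_def by (simp add: inner_diff_right inner_commute)
  qed
  moreover have "d \<in> span B"
    unfolding d_def by (intro span_diff[OF y] span_sum span_scale span_base)
  ultimately have "orthogonal d d"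
    using orthogonal_to_span by blast
  then show ?thesis
    unfolding orthogonal_self d_def by simp
qed

lemma orthogonal_projection_onto_kernel_exists:
  fixes M :: "real^'n^'n"
  shows "\<exists>P. transpose P = P \<and> P ** P = P
     \<and> (\<forall>x. M *v (P *v x) = 0) \<and> (\<forall>x. M *v x = 0 \<longrightarrow> P *v x = x)"
proof -
  define K where "K = {x. M *v x = 0}"
  have "subspace K"
    unfolding subspace_def K_def by (simp add: matrix_vector_right_distrib matrix_vector_mult_scaleR)
  then obtain B where B: "B \<subseteq> K" "pairwise orthogonal B" "\<And>x. x \<in> B \<Longrightarrow> norm x = 1"
    "independent B" "card B = dim K" "span B = K"
    by (rule orthonormal_basis_subspace) blast
  have "finite B"
    using B(4) independent_imp_finite by blast
  define f where "f x = (\<Sum>b\<in>B. (b \<bullet> x) *\<^sub>R b)" for x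
  have "linear f"
    unfolding linear_iff f_def
    by (simp add: inner_add_right scaleR_add_left sum.distrib scaleR_sum_right)
  define P where "P = matrix f"
  have Pv: "P *v x = f x" for x
    using matrix_vector_mul(2)[OF \<open>linear f\<close>] unfolding P_def by metis
  have fK: "f x \<in> K" for x
  proof -
    have "f x \<in> span B" unfolding f_def by (intro span_sum span_scale span_base) auto
    then show ?thesis using B(6) by simp
  qed
  have fixK: "f y = y" if "y \<in> K" for y
    unfolding f_def using orthonormal_expansion_eq[OF \<open>finite B\<close> B(2,3)] B(6) that by simp
  have "P $ i $ j = (\<Sum>b\<in>B. b $ j * b $ i)" for i j
    unfolding P_def matrix_def f_def by (simp add: sum_component inner_axis)
  then have "transpose P = P"
    by (simp add: vec_eq_iff transpose_def mult.commute)
  moreover have "P ** P = P"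
    unfolding matrix_eq by (simp add: matrix_vector_mul_assoc[symmetric] Pv fixK fK)
  ultimately show ?thesis
    using fK fixK by (intro exI[of _ P]) (simp add: Pv K_def)
qed

lemma kernel_projection:
  fixes M :: "real^'n^'n"
  defines "P \<equiv> kernel_projection M"
  shows "transpose P = P \<and> P ** P = P \<and> (\<forall>x. M *v (P *v x) = 0) \<and> (\<forall>x. M *v x = 0 \<longrightarrow> P *v x = x)"
  unfolding P_def kernel_projection_def by (rule someI_ex[OF orthogonal_projection_onto_kernel_exists])

lemma kernel_projection_symmetric: "transpose (kernel_projection M) = kernel_projection M"
  using kernel_projection[of M] by (rule conjunct1)

lemma kernel_projection_idempotent: "kernel_projection M ** kernel_projection M = kernel_projection M"
  using kernel_projection[of M] by (elim conjE)

lemma kernel_projection_into_kernel: "M *v (kernel_projection M *v x) = 0"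
  using kernel_projection[of M] by (elim conjE allE)

lemma kernel_projection_fixes_kernel: "M *v x = 0 \<Longrightarrow> kernel_projection M *v x = x"
  using kernel_projection[of M] by (elim conjE allE impE)

lemma kernel_projection_idempotent_vector:
  "kernel_projection M *v (kernel_projection M *v x) = kernel_projection M *v x"
  by (simp add: matrix_vector_mul_assoc kernel_projection_idempotent)

lemma kernel_projection_inner:
  "(kernel_projection M *v a) \<bullet> b = a \<bullet> (kernel_projection M *v b)"
  using inner_matrix_vector_mult_transpose[of "kernel_projection M" a b]
  by (simp add: kernel_projection_symmetric)

lemma norm_kernel_projection_le: "norm (kernel_projection M *v z) \<le> norm z"
proof -
  let ?P = "kernel_projection M"
  have "norm (?P *v z) * norm (?P *v z) = (?P *v z) \<bullet> (?P *v z)"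
    by (simp add: dot_square_norm power2_eq_square)
  also have "\<dots> = z \<bullet> (?P *v z)"
    using kernel_projection_inner[of M z "?P *v z"] by (simp add: kernel_projection_idempotent_vector)
  also have "\<dots> \<le> norm z * norm (?P *v z)"
    by (rule norm_cauchy_schwarz)
  finally have *: "norm (?P *v z) * norm (?P *v z) \<le> norm z * norm (?P *v z)" .
  show ?thesis
  proof (cases "?P *v z = 0")
    case False
    then show ?thesis using * by (simp add: mult_le_cancel_right)
  qed simp
qed

lemma perp_ker_iff_kernel_projection: "perp_ker v M \<longleftrightarrow> kernel_projection M *v v = 0"
proof
  assume "perp_ker v M"
  then have "v \<bullet> (kernel_projection M *v (kernel_projection M *v v)) = 0"
    unfolding perp_ker_def by (simp add: kernel_projection_into_kernel)
  then have "(kernel_projection M *v v) \<bullet> (kernel_projection M *v v) = 0"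
    by (simp add: kernel_projection_inner)
  then show "kernel_projection M *v v = 0"
    by simp
next
  assume Pv: "kernel_projection M *v v = 0"
  show "perp_ker v M"
    unfolding perp_ker_def
  proof (intro allI impI)
    fix x assume "M *v x = 0"
    then have "v \<bullet> x = v \<bullet> (kernel_projection M *v x)"
      by (simp add: kernel_projection_fixes_kernel)
    also have "\<dots> = 0"
      using Pv by (simp flip: kernel_projection_inner)
    finally show "v \<bullet> x = 0" .
  qed
qed

definition range_scaling :: "real^'n^'n \<Rightarrow> real \<Rightarrow> real^'n^'n" where
  "range_scaling P s = mat 1 - P + s *\<^sub>R P"

lemma range_scaling_mult:
  "P ** P = P \<Longrightarrow> range_scaling P s ** range_scaling P r = range_scaling P (s * r)"
  by (simp add: range_scaling_def matrix_add_ldistrib matrix_mult_add_left matrix_mult_diff_left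
      matrix_mult_diff_right matrix_mult_scaleR_left matrix_mult_scaleR_right algebra_simps)

lemma invertible_range_scaling:
  assumes "P ** P = P" "s \<noteq> 0"
  shows "invertible (range_scaling P s)"
  unfolding invertible_right_inverse
  using range_scaling_mult[OF assms(1), of s "1 / s"] assms(2)
  by (auto simp: range_scaling_def)

lemma transpose_range_scaling:
  "transpose P = P \<Longrightarrow> transpose (range_scaling P s) = range_scaling P s"
  by (simp add: range_scaling_def transpose_scalar
      linear_add[OF bounded_linear.linear[OF bounded_linear_transpose]]
      linear_diff[OF bounded_linear.linear[OF bounded_linear_transpose]])

lemma range_scaling_apply: "range_scaling P s *v x = x - P *v x + s *\<^sub>R (P *v x)"
  by (simp add: range_scaling_def matrix_vector_mult_add_rdistrib matrix_vector_mult_diff_rdistrib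
      scaleR_matrix_vector_assoc)

locale lagrange_tensor =
  fixes I :: "real set" and t0 :: real
    and R A A' A'' :: "real \<Rightarrow> real^'n^'n"
  assumes I: "open I" "is_interval I" "t0 \<in> I"
    and R_smooth: "smooth_on I R"
    and dA: "\<forall>t\<in>I. (A has_vector_derivative A' t) (at t within I)"
    and dA': "\<forall>t\<in>I. (A' has_vector_derivative A'' t) (at t within I)"
    and jacobi: "\<forall>t\<in>I. A'' t + R t ** A t = 0"
    and lag_ker: "\<forall>x. A t0 *v x = 0 \<and> A' t0 *v x = 0 \<longrightarrow> x = 0"
    and lag_sym: "\<forall>t\<in>I. \<forall>x y. (A' t *v x) \<bullet> (A t *v y) = (A t *v x) \<bullet> (A' t *v y)"
begin

lemma A_has_derivative: "t \<in> I \<Longrightarrow> (A has_vector_derivative A' t) (at t)"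
  using dA at_within_open[OF _ I(1)] by simp

lemma A'_has_derivative: "t \<in> I \<Longrightarrow> (A' has_vector_derivative A'' t) (at t)"
  using dA' at_within_open[OF _ I(1)] by simp

lemma A''_eq: "t \<in> I \<Longrightarrow> A'' t = - (R t ** A t)"
  using jacobi by (simp add: eq_neg_iff_add_eq_0)

lemma Ck_on_A_A': "Ck_on k I A \<and> Ck_on k I A'"
proof (induction k)
  case (Suc k)
  have "Ck_on k I (\<lambda>t. - (R t ** A t))"
    using Suc smooth_on_imp_Ck_on[OF I(1) R_smooth]
    by (intro Ck_on_minus Ck_on_matrix_mult) auto
  then have "Ck_on k I A''"
    by (rule Ck_on_cong[OF I(1)]) (simp add: A''_eq)
  then show ?case
    using Suc A_has_derivative A'_has_derivative by auto
qed simp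

lemma Ck_on_A: "Ck_on k I A"
  using Ck_on_A_A' by blast

lemma Ck_on_A': "Ck_on k I A'"
  using Ck_on_A_A' by blast

lemma segment_subset_I: "a \<in> I \<Longrightarrow> b \<in> I \<Longrightarrow> closed_segment a b \<subseteq> I"
  using I(2) is_interval_convex_1 closed_segment_subset by blast

lemma jacobi_acceleration_bound:
  assumes "closed_segment a b \<subseteq> I"
  obtains L where "0 \<le> L" "\<And>s x. s \<in> closed_segment a b \<Longrightarrow> norm (A'' s *v x) \<le> L * norm (A s *v x)"
proof -
  have "continuous_on I R"
    using Ck_on_imp_continuous_on[OF smooth_on_imp_Ck_on[OF I(1) R_smooth, of "Suc 0"]] .
  then have "compact (R ` closed_segment a b)"
    by (rule compact_continuous_image[OF continuous_on_subset[OF _ assms] compact_segment])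
  then have "bounded (R ` closed_segment a b)"
    by (rule compact_imp_bounded)
  then obtain N where "\<forall>M\<in>R ` closed_segment a b. norm M \<le> N"
    unfolding bounded_iff by (rule exE)
  then have N: "norm (R s) \<le> \<bar>N\<bar>" if "s \<in> closed_segment a b" for s
    using that by force
  show ?thesis
  proof (rule that[of "\<bar>N\<bar>"])
    fix s x assume s: "s \<in> closed_segment a b"
    then have "A'' s *v x = - (R s *v (A s *v x))"
      using assms by (auto simp: A''_eq matrix_vector_mul_assoc
          bounded_bilinear.minus_left[OF bounded_bilinear_matrix_vector_mult])
    then have "norm (A'' s *v x) \<le> norm (R s) * norm (A s *v x)"
      by (simp add: norm_matrix_vector_mult_le)
    also have "\<dots> \<le> \<bar>N\<bar> * norm (A s *v x)"
      using N[OF s] by (rule mult_right_mono) simp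
    finally show "norm (A'' s *v x) \<le> \<bar>N\<bar> * norm (A s *v x)" .
  qed simp
qed

lemma jacobi_energy_has_derivative:
  assumes "s \<in> I"
  shows "((\<lambda>s. (A s *v x) \<bullet> (A s *v x) + (A' s *v x) \<bullet> (A' s *v x)) has_real_derivative
    2 * ((A s *v x) \<bullet> (A' s *v x)) + 2 * ((A' s *v x) \<bullet> (A'' s *v x))) (at s)"
proof -
  have y: "((\<lambda>s. A s *v x) has_vector_derivative A' s *v x) (at s)"
    using bounded_bilinear.has_vector_derivative[OF bounded_bilinear_matrix_vector_mult
        A_has_derivative[OF assms], of "\<lambda>_. x" 0] by simp
  have z: "((\<lambda>s. A' s *v x) has_vector_derivative A'' s *v x) (at s)"
    using bounded_bilinear.has_vector_derivative[OF bounded_bilinear_matrix_vector_mult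
        A'_has_derivative[OF assms], of "\<lambda>_. x" 0] by simp
  show ?thesis
    using has_vector_derivative_add[OF
        bounded_bilinear.has_vector_derivative[OF bounded_bilinear_inner y y]
        bounded_bilinear.has_vector_derivative[OF bounded_bilinear_inner z z]]
    by (simp add: has_real_derivative_iff_has_vector_derivative inner_commute)
qed

lemma kernel_intersection_trivial:
  assumes t1: "t1 \<in> I" and x: "A t1 *v x = 0" "A' t1 *v x = 0"
  shows "x = 0"
proof -
  define E where "E s = (A s *v x) \<bullet> (A s *v x) + (A' s *v x) \<bullet> (A' s *v x)" for s
  define E' where "E' s = 2 * ((A s *v x) \<bullet> (A' s *v x)) + 2 * ((A' s *v x) \<bullet> (A'' s *v x))" for s
  have J: "closed_segment t0 t1 \<subseteq> I"
    using segment_subset_I[OF I(3) t1] .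
  obtain L where L: "0 \<le> L"
    "\<And>s x. s \<in> closed_segment t0 t1 \<Longrightarrow> norm (A'' s *v x) \<le> L * norm (A s *v x)"
    using jacobi_acceleration_bound[OF J] by blast
  have "E t0 = 0"
  proof (rule vanishes_of_deriv_bound[of t0 t1 E E' "1 + L"])
    show "(E has_real_derivative E' s) (at s)" if "s \<in> closed_segment t0 t1" for s
      unfolding E_def[abs_def] E'_def using J that by (intro jacobi_energy_has_derivative) (rule subsetD)
    show "\<bar>E' s\<bar> \<le> (1 + L) * E s" if s: "s \<in> closed_segment t0 t1" for s
    proof -
      let ?p = "norm (A s *v x)" and ?q = "norm (A' s *v x)"
      have "\<bar>E' s\<bar> \<le> 2 * (?p * ?q) + 2 * (?q * norm (A'' s *v x))"
        unfolding E'_def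
        using Cauchy_Schwarz_ineq2[of "A s *v x" "A' s *v x"] Cauchy_Schwarz_ineq2[of "A' s *v x" "A'' s *v x"]
        by linarith
      also have "\<dots> \<le> 2 * (?p * ?q) + 2 * (?q * (L * ?p))"
        using L(2)[OF s] by (intro add_left_mono mult_left_mono) auto
      also have "\<dots> = (1 + L) * (2 * ?p * ?q)"
        by (simp add: algebra_simps)
      also have "\<dots> \<le> (1 + L) * (?p\<^sup>2 + ?q\<^sup>2)"
        using L(1) by (intro mult_left_mono) (auto simp: sum_squares_bound)
      also have "\<dots> = (1 + L) * E s"
        by (simp add: E_def power2_norm_eq_inner)
      finally show ?thesis .
    qed
    show "0 \<le> E s" for s
      by (simp add: E_def)
    show "E t1 = 0"
      using x by (simp add: E_def)
  qed
  then have "(A t0 *v x) \<bullet> (A t0 *v x) = 0" "(A' t0 *v x) \<bullet> (A' t0 *v x) = 0"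
    using inner_ge_zero[of "A t0 *v x"] inner_ge_zero[of "A' t0 *v x"] unfolding E_def by linarith+
  then have "A t0 *v x = 0 \<and> A' t0 *v x = 0"
    by simp
  then show ?thesis
    using lag_ker by blast
qed

definition hadamard_quotient :: "real \<Rightarrow> real \<Rightarrow> real^'n^'n" where
  "hadamard_quotient ts t = integral {0..1} (\<lambda>u. A' (ts + u * (t - ts)))"

lemma A_diff_hadamard_quotient:
  "ts \<in> I \<Longrightarrow> t \<in> I \<Longrightarrow> A t - A ts = (t - ts) *\<^sub>R hadamard_quotient ts t"
  unfolding hadamard_quotient_def by (rule hadamard_lemma[OF I(2) _ _ A_has_derivative])

lemma hadamard_quotient_self: "hadamard_quotient ts ts = A' ts"
  by (simp add: hadamard_quotient_def)

lemma Ck_on_hadamard_quotient_A: "ts \<in> I \<Longrightarrow> Ck_on k I (hadamard_quotient ts)"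
  using Ck_on_hadamard_quotient[OF I(1,2) _ Ck_on_A', of ts k 0]
  by (simp add: hadamard_quotient_def[abs_def])

text \<open>On the range of the projection \<open>P\<close> onto \<open>ker A ts\<close>,
  \<open>A t = A t - A ts = (t - ts) hadamard_quotient ts t\<close>; hence \<open>A_factorization\<close> below.\<close>
definition normal_factor :: "real \<Rightarrow> real \<Rightarrow> real^'n^'n" where
  "normal_factor ts t = A t ** (mat 1 - kernel_projection (A ts))
     + hadamard_quotient ts t ** kernel_projection (A ts)"

lemma Ck_on_normal_factor: "ts \<in> I \<Longrightarrow> Ck_on k I (normal_factor ts)"
  unfolding normal_factor_def[abs_def]
  by (intro Ck_on_add Ck_on_matrix_mult[OF Ck_on_A Ck_on_const]
      Ck_on_matrix_mult[OF Ck_on_hadamard_quotient_A Ck_on_const])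

lemma A_factorization:
  assumes ts: "ts \<in> I" and t: "t \<in> I"
  shows "A t = normal_factor ts t ** range_scaling (kernel_projection (A ts)) (t - ts)"
proof -
  let ?P = "kernel_projection (A ts)" and ?H = "hadamard_quotient ts t"
  have AP: "A t *v (?P *v x) = (t - ts) *\<^sub>R (?H *v (?P *v x))" for x
  proof -
    have "A t *v (?P *v x) = (A t - A ts) *v (?P *v x)"
      by (simp add: matrix_vector_mult_diff_rdistrib kernel_projection_into_kernel)
    then show ?thesis
      by (simp add: A_diff_hadamard_quotient[OF ts t] scaleR_matrix_vector_assoc)
  qed
  have "normal_factor ts t *v (range_scaling ?P (t - ts) *v x) = A t *v x" for x
    by (simp add: normal_factor_def range_scaling_apply AP kernel_projection_idempotent_vector
        matrix_vector_mult_add_rdistrib matrix_vector_mult_diff_rdistrib matrix_vector_mult_diff_distrib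
        matrix_vector_right_distrib matrix_vector_mult_scaleR matrix_vector_mul_assoc[symmetric])
  then show ?thesis
    unfolding matrix_eq by (simp add: matrix_vector_mul_assoc)
qed

lemma invertible_normal_factor_self:
  assumes ts: "ts \<in> I"
  shows "invertible (normal_factor ts ts)"
proof -
  let ?P = "kernel_projection (A ts)"
  have "x = 0" if Bx: "normal_factor ts ts *v x = 0" for x
  proof -
    define a where "a = A ts *v (x - ?P *v x)"
    define c where "c = A' ts *v (?P *v x)"
    have "a + c = 0"
      using Bx by (simp add: a_def c_def normal_factor_def hadamard_quotient_self
          matrix_vector_mult_add_rdistrib matrix_vector_mult_diff_rdistrib
          matrix_vector_mult_diff_distrib matrix_vector_mul_assoc[symmetric])
    moreover have "c \<bullet> a = 0"
      using lag_sym ts by (simp add: a_def c_def kernel_projection_into_kernel)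
    moreover have "a = - c"
      using \<open>a + c = 0\<close> by (simp add: eq_neg_iff_add_eq_0)
    ultimately have "c = 0"
      by simp
    then have "A ts *v (x - ?P *v x) = 0"
      using \<open>a = - c\<close> by (simp add: a_def)
    then have "?P *v (x - ?P *v x) = x - ?P *v x"
      by (rule kernel_projection_fixes_kernel)
    then have Qx: "x - ?P *v x = 0"
      by (simp add: matrix_vector_mult_diff_distrib kernel_projection_idempotent_vector)
    have "?P *v x = 0"
      using kernel_intersection_trivial[OF ts kernel_projection_into_kernel] \<open>c = 0\<close>
      unfolding c_def .
    then show "x = 0"
      using Qx by simp
  qed
  then show ?thesis
    unfolding invertible_left_inverse matrix_left_invertible_ker by blast
qed

lemma normal_factor_neighbourhood:
  assumes ts: "ts \<in> I"
  obtains e where "0 < e" "ball ts e \<subseteq> I" "\<And>t. t \<in> ball ts e \<Longrightarrow> invertible (normal_factor ts t)"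
proof -
  have "continuous_on I (\<lambda>t. det (normal_factor ts t))"
    by (intro Ck_on_imp_continuous_on[of 0] Ck_on_det Ck_on_matrix_entry Ck_on_normal_factor ts)
  then have "open ((\<lambda>t. det (normal_factor ts t)) -` (- {0}) \<inter> I)"
    using I(1) continuous_on_open_vimage by blast
  moreover have "ts \<in> (\<lambda>t. det (normal_factor ts t)) -` (- {0}) \<inter> I"
    using invertible_normal_factor_self[OF ts] ts by (simp add: invertible_det_nz)
  ultimately obtain e where e: "0 < e" "ball ts e \<subseteq> (\<lambda>t. det (normal_factor ts t)) -` (- {0}) \<inter> I"
    using open_contains_ball by blast
  show ?thesis
  proof (rule that[OF e(1)])
    show "ball ts e \<subseteq> I"
      using e(2) by blast
    show "invertible (normal_factor ts t)" if "t \<in> ball ts e" for t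
      using e(2) that by (auto simp: invertible_det_nz)
  qed
qed

lemma invertible_A_near:
  assumes "ts \<in> I" "t \<in> I" "t \<noteq> ts" "invertible (normal_factor ts t)"
  shows "invertible (A t)"
proof -
  have "invertible (range_scaling (kernel_projection (A ts)) (t - ts))"
    using assms(3) by (intro invertible_range_scaling kernel_projection_idempotent) simp
  then show ?thesis
    unfolding A_factorization[OF assms(1,2)] by (rule invertible_mult[OF assms(4)])
qed

lemma inv_adj_factorization:
  assumes ts: "ts \<in> I" and t: "t \<in> I" "t \<noteq> ts" and B: "invertible (normal_factor ts t)"
  shows "inv_adj (A t) v
    = inv_adj (normal_factor ts t) (range_scaling (kernel_projection (A ts)) (1 / (t - ts)) *v v)"
proof (rule inv_adj_unique[OF invertible_A_near[OF ts t B]])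
  let ?P = "kernel_projection (A ts)" and ?B = "normal_factor ts t"
  let ?w = "inv_adj ?B (range_scaling ?P (1 / (t - ts)) *v v)"
  have "transpose (A t) = range_scaling ?P (t - ts) ** transpose ?B"
    using A_factorization[OF ts t(1)]
    by (simp add: matrix_transpose_mul transpose_range_scaling kernel_projection_symmetric)
  then have "transpose (A t) *v ?w = range_scaling ?P (t - ts) *v (transpose ?B *v ?w)"
    by (simp only: matrix_vector_mul_assoc)
  also have "\<dots> = (range_scaling ?P (t - ts) ** range_scaling ?P (1 / (t - ts))) *v v"
    by (simp only: inv_adj_solves[OF B] matrix_vector_mul_assoc)
  also have "\<dots> = range_scaling ?P 1 *v v"
    using t(2) by (simp add: range_scaling_mult kernel_projection_idempotent)
  also have "\<dots> = v"
    by (simp add: range_scaling_def)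
  finally show "transpose (A t) *v ?w = v" .
qed

lemma open_regular: "open {t\<in>I. invertible (A t)}"
proof -
  have "continuous_on I (\<lambda>t. det (A t))"
    by (intro Ck_on_imp_continuous_on[of 0] Ck_on_det Ck_on_matrix_entry Ck_on_A)
  then have "open ((\<lambda>t. det (A t)) -` (- {0}) \<inter> I)"
    using I(1) continuous_on_open_vimage by blast
  moreover have "(\<lambda>t. det (A t)) -` (- {0}) \<inter> I = {t\<in>I. invertible (A t)}"
    by (auto simp: invertible_det_nz)
  ultimately show ?thesis by simp
qed

lemma Ck_on_inv_adj_regular: "Ck_on k {t\<in>I. invertible (A t)} (\<lambda>t. inv_adj (A t) v)"
  by (rule Ck_on_inv_adj[OF open_regular Ck_on_subset[OF _ Ck_on_A]]) auto

lemma smooth_on_inv_adj_regular: "smooth_on {t\<in>I. invertible (A t)} (\<lambda>t. inv_adj (A t) v)"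
  by (rule Ck_on_imp_smooth_on[OF open_regular Ck_on_inv_adj_regular])

lemma inv_adj_eq_normal_factor:
  assumes "ts \<in> I" "t \<in> I" "t \<noteq> ts" "invertible (normal_factor ts t)" "perp_ker v (A ts)"
  shows "inv_adj (A t) v = inv_adj (normal_factor ts t) v"
  using inv_adj_factorization[OF assms(1-4)] assms(5)
  by (simp add: range_scaling_apply perp_ker_iff_kernel_projection)

lemma eventually_invertible_A:
  assumes ts: "ts \<in> I"
  shows "eventually (\<lambda>t. t \<in> I \<and> invertible (A t)) (at ts)"
proof -
  obtain e where e: "0 < e" "ball ts e \<subseteq> I" "\<And>t. t \<in> ball ts e \<Longrightarrow> invertible (normal_factor ts t)"
    using normal_factor_neighbourhood[OF ts] by blast
  have "eventually (\<lambda>t. t \<in> ball ts e \<and> t \<noteq> ts \<and> t \<in> UNIV) (at ts)"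
    using e(1) by (rule eventually_at_ball')
  then show ?thesis
  proof (rule eventually_mono)
    fix t assume "t \<in> ball ts e \<and> t \<noteq> ts \<and> t \<in> UNIV"
    then show "t \<in> I \<and> invertible (A t)"
      using e invertible_A_near[OF ts] by auto
  qed
qed

lemma perp_ker_of_continuous_extension:
  assumes ts: "ts \<in> I" and "0 < e" and X: "continuous_on (I \<inter> ball ts e) X"
    and X_eq: "\<forall>t\<in>I \<inter> ball ts e. invertible (A t) \<longrightarrow> X t = inv_adj (A t) v"
  shows "perp_ker v (A ts)"
proof (rule perp_ker_of_eventually_solves)
  show "isCont A ts"
    using Ck_on_imp_continuous_on[OF Ck_on_A[of "Suc 0"]] I(1) ts by (simp add: continuous_on_eq_continuous_at)
  show "isCont X ts"
    using X I(1) ts \<open>0 < e\<close> by (simp add: continuous_on_eq_continuous_at open_Int)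
  have "eventually (\<lambda>t. t \<in> ball ts e) (at ts)"
    using eventually_at_ball[OF \<open>0 < e\<close>, of ts UNIV] by simp
  with eventually_invertible_A[OF ts]
  show "eventually (\<lambda>t. transpose (A t) *v X t = v) (at ts)"
  proof eventually_elim
    case (elim t)
    then show ?case
      using X_eq by (simp add: inv_adj_solves del: transpose_matrix_vector)
  qed
qed

lemma smooth_extension_of_perp_ker:
  assumes ts: "ts \<in> I" and singular: "\<not> invertible (A ts)" and perp: "perp_ker v (A ts)"
  shows "\<exists>e>0. \<exists>X. smooth_on (I \<inter> ball ts e) X
    \<and> (\<forall>t\<in>I \<inter> ball ts e. invertible (A t) \<longrightarrow> X t = inv_adj (A t) v)"
proof -
  obtain e where e: "0 < e" "ball ts e \<subseteq> I" "\<And>t. t \<in> ball ts e \<Longrightarrow> invertible (normal_factor ts t)"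
    using normal_factor_neighbourhood[OF ts] by blast
  have "Ck_on k (ball ts e) (\<lambda>t. inv_adj (normal_factor ts t) v)" for k
    using e by (intro Ck_on_inv_adj Ck_on_subset[OF e(2) Ck_on_normal_factor[OF ts]]) auto
  then have "smooth_on (I \<inter> ball ts e) (\<lambda>t. inv_adj (normal_factor ts t) v)"
    using e(2) by (simp add: Int_absorb1 Ck_on_imp_smooth_on)
  moreover have "inv_adj (normal_factor ts t) v = inv_adj (A t) v"
    if t: "t \<in> I \<inter> ball ts e" "invertible (A t)" for t
  proof -
    have "t \<noteq> ts"
      using t(2) singular by blast
    with t(1) show ?thesis
      using inv_adj_eq_normal_factor[OF ts _ _ e(3) perp] by simp
  qed
  ultimately show ?thesis
    using e(1) by blast
qed

lemma smooth_extension_iff_perp_ker: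
  assumes ts: "ts \<in> I" and singular: "\<not> invertible (A ts)"
  shows "(\<exists>e>0. \<exists>X. smooth_on (I \<inter> ball ts e) X
            \<and> (\<forall>t\<in>I \<inter> ball ts e. invertible (A t) \<longrightarrow> X t = inv_adj (A t) v))
         \<longleftrightarrow> perp_ker v (A ts)"
proof
  assume "\<exists>e>0. \<exists>X. smooth_on (I \<inter> ball ts e) X
    \<and> (\<forall>t\<in>I \<inter> ball ts e. invertible (A t) \<longrightarrow> X t = inv_adj (A t) v)"
  then obtain e X where "0 < e" "smooth_on (I \<inter> ball ts e) X"
    and X_eq: "\<forall>t\<in>I \<inter> ball ts e. invertible (A t) \<longrightarrow> X t = inv_adj (A t) v"
    by blast
  moreover have "continuous_on (I \<inter> ball ts e) X"
    using I(1) \<open>smooth_on (I \<inter> ball ts e) X\<close> by (intro smooth_on_imp_continuous_on) auto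
  ultimately show "perp_ker v (A ts)"
    using perp_ker_of_continuous_extension[OF ts] by blast
qed (rule smooth_extension_of_perp_ker[OF ts singular])

lemma norm_kernel_projection_le_inv_adj:
  assumes ts: "ts \<in> I" and t: "t \<in> I" "t \<noteq> ts" and B: "invertible (normal_factor ts t)"
  shows "norm (kernel_projection (A ts) *v v)
    \<le> \<bar>t - ts\<bar> * norm (transpose (normal_factor ts t) *v inv_adj (A t) v)"
proof -
  let ?P = "kernel_projection (A ts)" and ?BY = "transpose (normal_factor ts t) *v inv_adj (A t) v"
  have "?BY = range_scaling ?P (1 / (t - ts)) *v v"
    using inv_adj_factorization[OF ts t B] inv_adj_solves[OF B] by (simp del: transpose_matrix_vector)
  then have "?P *v ?BY = (1 / (t - ts)) *\<^sub>R (?P *v v)"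
    by (simp add: range_scaling_apply matrix_vector_mult_diff_distrib matrix_vector_right_distrib
        matrix_vector_mult_scaleR kernel_projection_idempotent_vector del: transpose_matrix_vector)
  then have "?P *v v = (t - ts) *\<^sub>R (?P *v ?BY)"
    using t(2) by simp
  then show ?thesis
    using norm_kernel_projection_le[of "A ts" ?BY] by (simp add: mult_left_mono)
qed

lemma inverse_norm_inv_adj_le:
  assumes ts: "ts \<in> I" and nonperp: "\<not> perp_ker v (A ts)"
  obtains c where "eventually (\<lambda>t. 0 < inverse (norm (inv_adj (A t) v))
    \<and> inverse (norm (inv_adj (A t) v)) \<le> c * \<bar>t - ts\<bar>) (at ts)"
proof -
  let ?P = "kernel_projection (A ts)" and ?BT = "\<lambda>t. transpose (normal_factor ts t)"
  have Pv: "0 < norm (?P *v v)"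
    using nonperp by (simp add: perp_ker_iff_kernel_projection)
  then have "v \<noteq> 0" by auto
  obtain e where e: "0 < e" "ball ts e \<subseteq> I" "\<And>t. t \<in> ball ts e \<Longrightarrow> invertible (normal_factor ts t)"
    using normal_factor_neighbourhood[OF ts] by blast
  define M where "M = norm (?BT ts) + 1"
  have "continuous_on I ?BT"
    by (intro Ck_on_imp_continuous_on[of 0] Ck_on_transpose Ck_on_normal_factor ts)
  then have "((\<lambda>t. norm (?BT t)) \<longlongrightarrow> norm (?BT ts)) (at ts)"
    using I(1) ts by (intro tendsto_norm) (simp add: continuous_on_eq_continuous_at isCont_def)
  then have "eventually (\<lambda>t. norm (?BT t) < M) (at ts)"
    unfolding M_def by (rule order_tendstoD(2)) simp
  moreover have "eventually (\<lambda>t. t \<in> ball ts e \<and> t \<noteq> ts \<and> t \<in> UNIV) (at ts)"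
    using e(1) by (rule eventually_at_ball')
  ultimately have "eventually (\<lambda>t. 0 < inverse (norm (inv_adj (A t) v))
      \<and> inverse (norm (inv_adj (A t) v)) \<le> M / norm (?P *v v) * \<bar>t - ts\<bar>) (at ts)"
  proof eventually_elim
    case (elim t)
    then have t: "t \<in> I" "t \<noteq> ts" "invertible (normal_factor ts t)"
      using e by auto
    let ?y = "norm (inv_adj (A t) v)"
    have y: "0 < ?y"
      using inv_adj_nonzero[OF invertible_A_near[OF ts t] \<open>v \<noteq> 0\<close>] by simp
    have "norm (?P *v v) \<le> \<bar>t - ts\<bar> * norm (?BT t *v inv_adj (A t) v)"
      by (rule norm_kernel_projection_le_inv_adj[OF ts t])
    also have "\<dots> \<le> \<bar>t - ts\<bar> * (M * ?y)"
    proof (rule mult_left_mono)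
      have "norm (?BT t *v inv_adj (A t) v) \<le> norm (?BT t) * ?y"
        by (rule norm_matrix_vector_mult_le)
      also have "\<dots> \<le> M * ?y"
        using elim y by (intro mult_right_mono) auto
      finally show "norm (?BT t *v inv_adj (A t) v) \<le> M * ?y" .
    qed simp
    finally have "inverse ?y \<le> M / norm (?P *v v) * \<bar>t - ts\<bar>"
      using y Pv by (simp add: field_simps)
    then show ?case
      using y by simp
  qed
  then show ?thesis
    by (rule that)
qed

lemma inverse_norm_inv_adj_tendsto_0:
  assumes ts: "ts \<in> I" and nonperp: "\<not> perp_ker v (A ts)"
  shows "((\<lambda>t. inverse (norm (inv_adj (A t) v))) \<longlongrightarrow> 0) (at ts)"
    and "eventually (\<lambda>t. 0 < inverse (norm (inv_adj (A t) v))) (at ts)"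
proof -
  obtain c where bound: "eventually (\<lambda>t. 0 < inverse (norm (inv_adj (A t) v))
    \<and> inverse (norm (inv_adj (A t) v)) \<le> c * \<bar>t - ts\<bar>) (at ts)"
    using inverse_norm_inv_adj_le[OF ts nonperp] by blast
  then show "eventually (\<lambda>t. 0 < inverse (norm (inv_adj (A t) v))) (at ts)"
    by eventually_elim simp
  have "((\<lambda>t. c * \<bar>t - ts\<bar>) \<longlongrightarrow> c * \<bar>ts - ts\<bar>) (at ts)"
    by (intro tendsto_intros)
  then have c_lim: "((\<lambda>t. c * \<bar>t - ts\<bar>) \<longlongrightarrow> 0) (at ts)"
    by simp
  show "((\<lambda>t. inverse (norm (inv_adj (A t) v))) \<longlongrightarrow> 0) (at ts)"
  proof (rule tendsto_sandwich[OF _ _ tendsto_const c_lim])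
    show "eventually (\<lambda>t. 0 \<le> inverse (norm (inv_adj (A t) v))) (at ts)"
      using bound by eventually_elim simp
    show "eventually (\<lambda>t. inverse (norm (inv_adj (A t) v)) \<le> c * \<bar>t - ts\<bar>) (at ts)"
      using bound by eventually_elim simp
  qed
qed

text \<open>At a singular \<open>t\<close> with \<open>v \<bottom> ker A t\<close> the value is the limit of \<open>g\<^sub>v\<close>, computed from the
  normal form at \<open>t\<close>.\<close>
definition extended_g :: "real^'n \<Rightarrow> real \<Rightarrow> real" where
  "extended_g v t =
    (if invertible (A t) then (norm v)\<^sup>2 / norm (inv_adj (A t) v)
     else if perp_ker v (A t) then (norm v)\<^sup>2 / norm (inv_adj (normal_factor t t) v)
     else 0)"

lemma extended_g_pos_iff:
  assumes "t \<in> I" "v \<noteq> 0"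
  shows "0 < extended_g v t \<longleftrightarrow> perp_ker v (A t)"
proof (cases "invertible (A t)")
  case True
  then show ?thesis
    using inv_adj_nonzero[OF True assms(2)] invertible_imp_perp_ker[OF True] assms(2)
    by (simp add: extended_g_def)
next
  case False
  have "inv_adj (normal_factor t t) v \<noteq> 0"
    using inv_adj_nonzero[OF invertible_normal_factor_self[OF assms(1)] assms(2)] .
  then show ?thesis
    using False assms(2) by (simp add: extended_g_def)
qed

lemma isCont_extended_g_regular:
  assumes "ts \<in> I" "invertible (A ts)" "v \<noteq> 0"
  shows "isCont (extended_g v) ts"
proof -
  let ?S = "{t\<in>I. invertible (A t)}"
  have "continuous_on ?S (\<lambda>t. inv_adj (A t) v)"
    by (rule Ck_on_imp_continuous_on[OF Ck_on_inv_adj_regular[of "Suc 0"]])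
  moreover have "inv_adj (A t) v \<noteq> 0" if "t \<in> ?S" for t
    using inv_adj_nonzero[of "A t" v] that assms(3) by simp
  ultimately have "continuous_on ?S (\<lambda>t. (norm v)\<^sup>2 / norm (inv_adj (A t) v))"
    by (intro continuous_intros) auto
  then have "continuous_on ?S (extended_g v)"
    by (rule continuous_on_eq) (simp add: extended_g_def)
  then show ?thesis
    using open_regular assms(1,2) by (simp add: continuous_on_eq_continuous_at)
qed

lemma isCont_extended_g_perp:
  assumes ts: "ts \<in> I" and singular: "\<not> invertible (A ts)" and perp: "perp_ker v (A ts)"
    and "v \<noteq> 0"
  shows "isCont (extended_g v) ts"
proof -
  obtain e where e: "0 < e" "ball ts e \<subseteq> I" "\<And>t. t \<in> ball ts e \<Longrightarrow> invertible (normal_factor ts t)"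
    using normal_factor_neighbourhood[OF ts] by blast
  define Z where "Z t = (norm v)\<^sup>2 / norm (inv_adj (normal_factor ts t) v)" for t
  have "continuous_on (ball ts e) (\<lambda>t. inv_adj (normal_factor ts t) v)"
    using e by (intro Ck_on_imp_continuous_on[of 0] Ck_on_inv_adj
        Ck_on_subset[OF e(2) Ck_on_normal_factor[OF ts]]) auto
  moreover have "inv_adj (normal_factor ts t) v \<noteq> 0" if "t \<in> ball ts e" for t
    using inv_adj_nonzero[OF e(3)[OF that] \<open>v \<noteq> 0\<close>] .
  ultimately have Z_cont: "continuous_on (ball ts e) Z"
    unfolding Z_def by (intro continuous_intros) auto
  have Z_eq: "extended_g v t = Z t" if t: "t \<in> ball ts e" for t
  proof (cases "t = ts")
    case True
    then show ?thesis
      using singular perp by (simp add: extended_g_def Z_def)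
  next
    case False
    with t e have "t \<in> I" "invertible (A t)"
      using invertible_A_near[OF ts] by auto
    then show ?thesis
      using inv_adj_eq_normal_factor[OF ts _ False e(3)[OF t] perp]
      by (simp add: extended_g_def Z_def)
  qed
  have "continuous_on (ball ts e) (extended_g v)"
    by (rule continuous_on_eq[OF Z_cont]) (simp add: Z_eq)
  then show ?thesis
    using e(1) by (simp add: continuous_on_eq_continuous_at)
qed

lemma extended_g_tendsto_0:
  assumes ts: "ts \<in> I" and nonperp: "\<not> perp_ker v (A ts)"
  shows "(extended_g v \<longlongrightarrow> 0) (at ts)"
proof -
  have "eventually (\<lambda>t. (norm v)\<^sup>2 * inverse (norm (inv_adj (A t) v)) = extended_g v t) (at ts)"
    using eventually_invertible_A[OF ts] by eventually_elim (simp add: extended_g_def divide_inverse)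
  moreover have "((\<lambda>t. (norm v)\<^sup>2 * inverse (norm (inv_adj (A t) v))) \<longlongrightarrow> (norm v)\<^sup>2 * 0) (at ts)"
    by (intro tendsto_mult tendsto_const inverse_norm_inv_adj_tendsto_0(1)[OF ts nonperp])
  ultimately show ?thesis
    by (simp add: tendsto_cong)
qed

lemma continuous_on_extended_g:
  assumes "v \<noteq> 0"
  shows "continuous_on I (extended_g v)"
proof -
  have "isCont (extended_g v) ts" if ts: "ts \<in> I" for ts
  proof -
    consider "invertible (A ts)" | "\<not> invertible (A ts)" "perp_ker v (A ts)"
      | "\<not> perp_ker v (A ts)"
      by blast
    then show ?thesis
    proof cases
      case 3
      then have "extended_g v ts = 0"
        using invertible_imp_perp_ker by (auto simp: extended_g_def)
      then show ?thesis
        using extended_g_tendsto_0[OF ts 3] by (simp add: isCont_def)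
    qed (use isCont_extended_g_regular isCont_extended_g_perp ts assms in auto)
  qed
  then show ?thesis
    using I(1) by (simp add: continuous_on_eq_continuous_at)
qed

lemma norm_inv_adj_at_top:
  assumes "ts \<in> I" "\<not> perp_ker v (A ts)"
  shows "filterlim (\<lambda>t. norm (inv_adj (A t) v)) at_top (at ts within {t\<in>I. invertible (A t)})"
proof -
  have "filterlim (\<lambda>t. inverse (inverse (norm (inv_adj (A t) v)))) at_top (at ts)"
    using inverse_norm_inv_adj_tendsto_0[OF assms] by (rule filterlim_inverse_at_top)
  then have "filterlim (\<lambda>t. norm (inv_adj (A t) v)) at_top (at ts)"
    by simp
  then show ?thesis
    by (rule filterlim_mono[OF _ order_refl at_le]) simp
qed

lemma g_continuous_extension:
  assumes "v \<noteq> 0"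
  shows "\<exists>G :: real \<Rightarrow> real. continuous_on I G
       \<and> (\<forall>t\<in>I. invertible (A t) \<longrightarrow> G t = (norm v)\<^sup>2 / norm (inv_adj (A t) v))
       \<and> (\<forall>ts\<in>I. \<not> invertible (A ts) \<and> \<not> perp_ker v (A ts) \<longrightarrow>
            G ts = 0 \<and>
            filterlim (\<lambda>t. norm (inv_adj (A t) v)) at_top
              (at ts within {t\<in>I. invertible (A t)}))
       \<and> (\<forall>t\<in>I. G t > 0 \<longleftrightarrow> perp_ker v (A t))"
proof (intro exI[of _ "extended_g v"] conjI ballI impI)
  show "continuous_on I (extended_g v)"
    using continuous_on_extended_g[OF assms] .
  show "extended_g v t = (norm v)\<^sup>2 / norm (inv_adj (A t) v)" if "invertible (A t)" for t
    using that by (simp add: extended_g_def)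
  fix ts assume "ts \<in> I" and singular: "\<not> invertible (A ts) \<and> \<not> perp_ker v (A ts)"
  then show "extended_g v ts = 0"
    by (simp add: extended_g_def)
  show "filterlim (\<lambda>t. norm (inv_adj (A t) v)) at_top (at ts within {t\<in>I. invertible (A t)})"
    using norm_inv_adj_at_top \<open>ts \<in> I\<close> singular by blast
next
  show "0 < extended_g v t \<longleftrightarrow> perp_ker v (A t)" if "t \<in> I" for t
    using extended_g_pos_iff[OF that assms] .
qed

end

theorem proposition1p3:
  fixes I :: "real set" and t0 :: real
    and R A A' A'' :: "real \<Rightarrow> real^'n^'n" and v :: "real^'n"
  assumes I: "open I" "is_interval I" "t0 \<in> I"
    and R_smooth: "smooth_on I R"
    and R_sym: "\<forall>t\<in>I. transpose (R t) = R t"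
    and dA: "\<forall>t\<in>I. (A has_vector_derivative A' t) (at t within I)"
    and dA': "\<forall>t\<in>I. (A' has_vector_derivative A'' t) (at t within I)"
    and jacobi: "\<forall>t\<in>I. A'' t + R t ** A t = 0"
    and lag_ker: "\<forall>x. A t0 *v x = 0 \<and> A' t0 *v x = 0 \<longrightarrow> x = 0"
    and lag_sym: "\<forall>t\<in>I. \<forall>x y. (A' t *v x) \<bullet> (A t *v y) = (A t *v x) \<bullet> (A' t *v y)"
  shows
    "smooth_on {t\<in>I. invertible (A t)} (\<lambda>t. inv_adj (A t) v)
     \<and> (\<forall>ts\<in>I. \<not> invertible (A ts) \<longrightarrow>
          ((\<exists>e>0. \<exists>X :: real \<Rightarrow> real^'n. smooth_on (I \<inter> ball ts e) X \<and>
               (\<forall>t\<in>I \<inter> ball ts e. invertible (A t) \<longrightarrow> X t = inv_adj (A t) v))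
           \<longleftrightarrow> perp_ker v (A ts)))
     \<and> (v \<noteq> 0 \<longrightarrow>
          (\<exists>G :: real \<Rightarrow> real. continuous_on I G
             \<and> (\<forall>t\<in>I. invertible (A t) \<longrightarrow> G t = (norm v)\<^sup>2 / norm (inv_adj (A t) v))
             \<and> (\<forall>ts\<in>I. \<not> invertible (A ts) \<and> \<not> perp_ker v (A ts) \<longrightarrow>
                  G ts = 0 \<and>
                  filterlim (\<lambda>t. norm (inv_adj (A t) v)) at_top
                    (at ts within {t\<in>I. invertible (A t)}))
             \<and> (\<forall>t\<in>I. G t > 0 \<longleftrightarrow> perp_ker v (A t))))"
proof -
  interpret lagrange_tensor I t0 R A A' A''
    by unfold_locales (fact assms)+
  show ?thesis
    using smooth_on_inv_adj_regular smooth_extension_iff_perp_ker g_continuous_extension by blast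
qed

end
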